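(* Let $\gamma\ge 1$ be a constant, $\kappa=\gamma^{1/4}$, and for $m\in\mathbb N$ let $n=\lfloor\gamma m\rfloor$, $N=n+m$. Let $b>0$ be a constant, $d=b\log N$, $p=d/\sqrt{mn}$. Let $\mathcal G$ be the random bipartite graph on $V_1=\{1,\dots,n\}$, $V_2=\{n+1,\dots,n+m\}$ in which each pair $\{x,y\}$, $x\in V_1,y\in V_2$, is an edge independently with probability $p$, and let $D^{(1)}=\mathrm{diag}\{D_x\}_{x\in V_1}$ be the diagonal matrix of degrees of the vertices in $V_1$. Let $h(u)=(1+u)\log(1+u)-u$ and assume $b>\kappa^2[h(\kappa^2-1)]^{-1}$. Then there exist constants $\epsilon>0$ and $\nu>0$ such that with probability at least $1-N^{-\nu}$, $$\|(I_n-d^{-1}D^{(1)})^{-1}\|\le\epsilon^{-1}.$$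
   Context: $\log$ is the natural logarithm; $\|\cdot\|$ is the operator norm. *)

theory Defs
  imports "HOL-Probability.Probability"
begin

definition hfun :: "real \<Rightarrow> real" where
  "hfun u = (1 + u) * ln (1 + u) - u"

definition mat_mult_on :: "'i set \<Rightarrow> ('i \<Rightarrow> 'i \<Rightarrow> real) \<Rightarrow> ('i \<Rightarrow> 'i \<Rightarrow> real) \<Rightarrow> 'i \<Rightarrow> 'i \<Rightarrow> real" where
  "mat_mult_on I A B = (\<lambda>i j. \<Sum>k\<in>I. A i k * B k j)"

definition id_mat :: "'i \<Rightarrow> 'i \<Rightarrow> real" where
  "id_mat = (\<lambda>i j. if i = j then 1 else 0)"

definition is_inverse_on :: "'i set \<Rightarrow> ('i \<Rightarrow> 'i \<Rightarrow> real) \<Rightarrow> ('i \<Rightarrow> 'i \<Rightarrow> real) \<Rightarrow> bool" where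
  "is_inverse_on I A B \<longleftrightarrow>
     (\<forall>i\<in>I. \<forall>j\<in>I. mat_mult_on I A B i j = id_mat i j \<and> mat_mult_on I B A i j = id_mat i j)"

definition op_norm_on :: "'i set \<Rightarrow> ('i \<Rightarrow> 'i \<Rightarrow> real) \<Rightarrow> real" where
  "op_norm_on I A = (SUP v\<in>{v. (\<Sum>j\<in>I. (v j)^2) = 1}. sqrt (\<Sum>i\<in>I. (\<Sum>j\<in>I. A i j * v j)^2))"

definition random_bipartite :: "nat set \<Rightarrow> nat set \<Rightarrow> real \<Rightarrow> (nat \<times> nat \<Rightarrow> bool) pmf" where
  "random_bipartite V1 V2 p = Pi_pmf (V1 \<times> V2) False (\<lambda>_. bernoulli_pmf p)"

definition degree1 :: "nat set \<Rightarrow> (nat \<times> nat \<Rightarrow> bool) \<Rightarrow> nat \<Rightarrow> nat" where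
  "degree1 V2 G x = card {y\<in>V2. G (x, y)}"

definition degree_mat :: "nat set \<Rightarrow> (nat \<times> nat \<Rightarrow> bool) \<Rightarrow> nat \<Rightarrow> nat \<Rightarrow> real" where
  "degree_mat V2 G = (\<lambda>x y. if x = y then real (degree1 V2 G x) else 0)"

end

theory Submission
  imports Defs
begin

text \<open>The matrix \<open>I - D/d\<close> is diagonal with entries \<open>1 - D\<^sub>x/d\<close>, so its inverse has norm
  at most \<open>1/\<epsilon>\<close> as soon as every degree \<open>D\<^sub>x\<close> is at most \<open>(1 - \<epsilon>) d\<close>. Each \<open>D\<^sub>x\<close> is
  binomial with mean \<open>m p \<approx> d/\<kappa>\<^sup>2\<close>, and Chernoff's bound with parameter \<open>s = ln \<kappa>\<^sup>2\<close> gives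
  \<open>P(D\<^sub>x \<ge> d) \<le> exp (- d h(\<kappa>\<^sup>2 - 1) / \<kappa>\<^sup>2) = N powr (- b h(\<kappa>\<^sup>2 - 1) / \<kappa>\<^sup>2)\<close>. The hypothesis
  makes this exponent exceed 1, which leaves room for a small \<open>\<epsilon>\<close> and a relative error \<open>\<delta>\<close> in
  the mean while keeping the tail below \<open>N powr (-(1 + \<nu>))\<close>; a union bound over the
  \<open>n \<le> N\<close> vertices of \<open>V\<^sub>1\<close> finishes the proof.\<close>

lemma bernoulli_pmf_min_1: "0 \<le> p \<Longrightarrow> bernoulli_pmf (min 1 p) = bernoulli_pmf p"
proof -
  interpret pmf_as_function .
  show "0 \<le> p \<Longrightarrow> bernoulli_pmf (min 1 p) = bernoulli_pmf p"
    by transfer (auto simp: fun_eq_iff)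
qed

lemma exp_mult_card_eq_prod:
  fixes s :: real
  assumes "finite I" "S \<subseteq> I"
  shows "exp (s * real (card {i\<in>S. G i})) = (\<Prod>i\<in>I. if i \<in> S \<and> G i then exp s else 1)"
proof -
  have "{i\<in>S. G i} = I \<inter> {i. i \<in> S \<and> G i}" using assms(2) by auto
  then show ?thesis
    using assms(1) by (simp add: prod.If_cases exp_of_nat_mult[symmetric] mult.commute)
qed

lemma expectation_exp_card_Pi_bernoulli:
  fixes p s :: real
  assumes "finite I" "S \<subseteq> I" "0 \<le> p" "p \<le> 1"
  shows "measure_pmf.expectation (Pi_pmf I False (\<lambda>_. bernoulli_pmf p))
           (\<lambda>G. exp (s * real (card {i\<in>S. G i}))) = (1 + p * (exp s - 1)) ^ card S"
proof -
  have "measure_pmf.expectation (Pi_pmf I False (\<lambda>_. bernoulli_pmf p))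
           (\<lambda>G. exp (s * real (card {i\<in>S. G i})))
      = measure_pmf.expectation (Pi_pmf I False (\<lambda>_. bernoulli_pmf p))
           (\<lambda>G. \<Prod>i\<in>I. if i \<in> S \<and> G i then exp s else 1)"
    using assms(1,2) by (simp add: exp_mult_card_eq_prod)
  also have "\<dots> = (\<Prod>i\<in>I. measure_pmf.expectation (bernoulli_pmf p)
                            (\<lambda>b. if i \<in> S \<and> b then exp s else 1))"
    by (rule expectation_prod_Pi_pmf[OF assms(1)]) (auto intro: integrable_measure_pmf_finite)
  also have "\<dots> = (\<Prod>i\<in>I. if i \<in> S then 1 + p * (exp s - 1) else 1)"
    using assms(3,4) by (intro prod.cong) (auto simp: algebra_simps)
  also have "\<dots> = (1 + p * (exp s - 1)) ^ card S"
    using assms(1,2) by (simp add: prod.If_cases Int_absorb1)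
  finally show ?thesis .
qed

text \<open>Chernoff's bound for the number of successes among the coordinates in \<open>S\<close>; the
  parameter \<open>p\<close> may exceed 1, since \<^const>\<open>bernoulli_pmf\<close> clips it.\<close>
lemma prob_card_ge_Pi_bernoulli:
  fixes p s t :: real
  assumes "finite I" "S \<subseteq> I" "0 \<le> p" "0 \<le> s"
  shows "measure_pmf.prob (Pi_pmf I False (\<lambda>_. bernoulli_pmf p)) {G. t \<le> real (card {i\<in>S. G i})}
           \<le> exp (real (card S) * p * (exp s - 1) - s * t)"
proof -
  define q where "q = min 1 p"
  define M where "M = Pi_pmf I False (\<lambda>_. bernoulli_pmf q)"
  define u where "u = (\<lambda>G. exp (s * real (card {i\<in>S. G i})))"
  have q: "0 \<le> q" "q \<le> 1" "q \<le> p" using assms(3) by (auto simp: q_def)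
  have M_eq: "Pi_pmf I False (\<lambda>_. bernoulli_pmf p) = M"
    using assms(3) by (simp add: M_def q_def bernoulli_pmf_min_1)
  have "measure_pmf.prob M {G. t \<le> real (card {i\<in>S. G i})}
          \<le> measure_pmf.prob M {G\<in>space (measure_pmf M). exp (s * t) \<le> u G}"
    using assms(4) by (intro measure_pmf.finite_measure_mono) (auto simp: u_def mult_left_mono)
  also have "\<dots> \<le> measure_pmf.expectation M u / exp (s * t)"
  proof (rule integral_Markov_inequality_measure[where A = UNIV])
    show "integrable (measure_pmf M) u"
      unfolding M_def u_def exp_mult_card_eq_prod[OF assms(1,2)]
      by (rule integrable_prod_Pi_pmf[OF assms(1)]) (auto intro: integrable_measure_pmf_finite)
  qed (auto simp: u_def)
  also have "measure_pmf.expectation M u = (1 + q * (exp s - 1)) ^ card S"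
    unfolding M_def u_def using assms(1,2) q(1,2) by (rule expectation_exp_card_Pi_bernoulli)
  also have "\<dots> \<le> exp (q * (exp s - 1)) ^ card S"
    using q(1) assms(4) by (intro power_mono) (auto simp: exp_ge_add_one_self)
  also have "\<dots> \<le> exp (p * (exp s - 1)) ^ card S"
    using q(3) assms(4) by (intro power_mono) (auto intro: mult_right_mono)
  finally show ?thesis
    by (simp add: M_eq exp_of_nat_mult[symmetric] exp_diff mult.assoc divide_right_mono)
qed

lemma degree1_eq_card_edges: "degree1 V2 G x = card {z\<in>{x} \<times> V2. G z}"
proof -
  have "{z\<in>{x} \<times> V2. G z} = Pair x ` {y\<in>V2. G (x, y)}" by auto
  then show ?thesis by (simp add: degree1_def card_image inj_on_def)
qed

lemma prob_degree1_ge: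
  fixes p s t :: real
  assumes "finite V1" "finite V2" "x \<in> V1" "0 \<le> p" "0 \<le> s"
  shows "measure_pmf.prob (random_bipartite V1 V2 p) {G. t \<le> real (degree1 V2 G x)}
           \<le> exp (real (card V2) * p * (exp s - 1) - s * t)"
proof -
  have "{x} \<times> V2 \<subseteq> V1 \<times> V2" using assms(3) by blast
  from prob_card_ge_Pi_bernoulli[OF _ this assms(4,5), of t] assms(1,2) show ?thesis
    by (simp add: random_bipartite_def degree1_eq_card_edges card_cartesian_product)
qed

definition diag_mat :: "('i \<Rightarrow> real) \<Rightarrow> 'i \<Rightarrow> 'i \<Rightarrow> real" where
  "diag_mat c = (\<lambda>i j. if i = j then c i else 0)"

lemma sum_diag_mat_mult:
  assumes "finite I" "i \<in> I"
  shows "(\<Sum>j\<in>I. diag_mat c i j * v j) = c i * v i"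
proof -
  have "(\<Sum>j\<in>I. diag_mat c i j * v j) = (\<Sum>j\<in>I. if i = j then c i * v i else 0)"
    by (intro sum.cong) (auto simp: diag_mat_def)
  then show ?thesis using assms by simp
qed

lemma mat_mult_on_diag_mat:
  assumes "finite I" "i \<in> I"
  shows "mat_mult_on I (diag_mat a) (diag_mat b) i j = diag_mat (\<lambda>k. a k * b k) i j"
  using assms by (simp add: mat_mult_on_def sum_diag_mat_mult) (simp add: diag_mat_def)

lemma is_inverse_on_diag_mat:
  assumes "finite I" "\<And>i. i \<in> I \<Longrightarrow> c i \<noteq> 0"
  shows "is_inverse_on I (diag_mat c) (diag_mat (\<lambda>i. 1 / c i))"
  using assms unfolding is_inverse_on_def
  by (simp add: mat_mult_on_diag_mat) (simp add: diag_mat_def id_mat_def)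

lemma op_norm_on_diag_mat_le:
  assumes "finite I" "I \<noteq> {}" "\<And>i. i \<in> I \<Longrightarrow> \<bar>c i\<bar> \<le> C"
  shows "op_norm_on I (diag_mat c) \<le> C"
proof -
  obtain i0 where "i0 \<in> I" using assms(2) by blast
  have C: "0 \<le> C" using assms(3)[OF \<open>i0 \<in> I\<close>] by linarith
  have unit: "(\<Sum>j\<in>I. (diag_mat (\<lambda>_. 1) i0 j)^2) = 1"
    using assms(1) \<open>i0 \<in> I\<close>
    by (subst sum.cong[OF refl, of _ _ "\<lambda>j. if i0 = j then 1 else 0"]) (auto simp: diag_mat_def)
  have c_sq: "(c i)^2 \<le> C^2" if "i \<in> I" for i
    using power_mono[OF assms(3)[OF that] abs_ge_zero, of 2] by simp
  have "sqrt (\<Sum>i\<in>I. (\<Sum>j\<in>I. diag_mat c i j * v j)^2) \<le> C"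
    if v: "(\<Sum>j\<in>I. (v j)^2) = 1" for v
  proof -
    have "(\<Sum>i\<in>I. (\<Sum>j\<in>I. diag_mat c i j * v j)^2) = (\<Sum>i\<in>I. (c i)^2 * (v i)^2)"
      using assms(1) by (simp add: sum_diag_mat_mult power_mult_distrib)
    also have "\<dots> \<le> (\<Sum>i\<in>I. C^2 * (v i)^2)"
      using c_sq by (intro sum_mono mult_right_mono) auto
    also have "\<dots> = C^2" using v by (simp add: sum_distrib_left[symmetric])
    finally show ?thesis using C real_sqrt_le_mono by fastforce
  qed
  then show ?thesis
    unfolding op_norm_on_def using unit by (intro cSUP_least) auto
qed

lemma id_minus_degree_mat_eq_diag:
  "(\<lambda>x y. id_mat x y - degree_mat V2 G x y / d) = diag_mat (\<lambda>x. 1 - real (degree1 V2 G x) / d)"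
  by (auto simp: fun_eq_iff id_mat_def degree_mat_def diag_mat_def)

lemma inverse_norm_bound_if_degree1_le:
  fixes d \<epsilon> :: real
  assumes "finite V1" "V1 \<noteq> {}" "0 < d" "0 < \<epsilon>"
    and le: "\<And>x. x \<in> V1 \<Longrightarrow> real (degree1 V2 G x) \<le> (1 - \<epsilon>) * d"
  shows "\<exists>B. is_inverse_on V1 (\<lambda>x y. id_mat x y - degree_mat V2 G x y / d) B
             \<and> op_norm_on V1 B \<le> 1 / \<epsilon>"
proof -
  define c where "c x = 1 - real (degree1 V2 G x) / d" for x
  have c_ge: "\<epsilon> \<le> c x" if "x \<in> V1" for x
    using le[OF that] assms(3) by (simp add: c_def field_simps)
  have inv_c_le: "\<bar>1 / c x\<bar> \<le> 1 / \<epsilon>" if "x \<in> V1" for x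
    using c_ge[OF that] assms(4) by (simp add: frac_le)
  have "is_inverse_on V1 (diag_mat c) (diag_mat (\<lambda>x. 1 / c x))"
    using assms(1,4) c_ge by (intro is_inverse_on_diag_mat) force+
  moreover have "op_norm_on V1 (diag_mat (\<lambda>x. 1 / c x)) \<le> 1 / \<epsilon>"
    using assms(1,2) inv_c_le by (rule op_norm_on_diag_mat_le)
  ultimately show ?thesis
    unfolding id_minus_degree_mat_eq_diag c_def by blast
qed

lemma prob_inverse_norm_bound_ge:
  fixes M :: "(nat \<times> nat \<Rightarrow> bool) pmf" and d \<epsilon> r :: real
  assumes "finite V1" "V1 \<noteq> {}" "0 < d" "0 < \<epsilon>"
    and tail: "\<And>x. x \<in> V1 \<Longrightarrow>
      measure_pmf.prob M {G. (1 - \<epsilon>) * d \<le> real (degree1 V2 G x)} \<le> r"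
  shows "measure_pmf.prob M
           {G. \<exists>B. is_inverse_on V1 (\<lambda>x y. id_mat x y - degree_mat V2 G x y / d) B
                  \<and> op_norm_on V1 B \<le> 1 / \<epsilon>}
         \<ge> 1 - real (card V1) * r"
proof -
  define U where "U = (\<Union>x\<in>V1. {G. (1 - \<epsilon>) * d \<le> real (degree1 V2 G x)})"
  have "measure_pmf.prob M U \<le> (\<Sum>x\<in>V1. measure_pmf.prob M {G. (1 - \<epsilon>) * d \<le> real (degree1 V2 G x)})"
    unfolding U_def using assms(1) by (intro measure_pmf.finite_measure_subadditive_finite) auto
  also have "\<dots> \<le> real (card V1) * r"
    using sum_mono[OF tail] by simp
  finally have "1 - real (card V1) * r \<le> measure_pmf.prob M (UNIV - U)"
    using measure_pmf.prob_compl[of U M] by simp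
  also have "\<dots> \<le> measure_pmf.prob M
           {G. \<exists>B. is_inverse_on V1 (\<lambda>x y. id_mat x y - degree_mat V2 G x y / d) B
                  \<and> op_norm_on V1 B \<le> 1 / \<epsilon>}"
    using inverse_norm_bound_if_degree1_le[OF assms(1-4)]
    by (intro measure_pmf.finite_measure_mono) (auto simp: U_def not_le less_imp_le)
  finally show ?thesis .
qed

lemma nat_floor_mult_ge:
  fixes \<gamma> :: real
  assumes "1 \<le> \<gamma>"
  shows "m \<le> nat \<lfloor>\<gamma> * real m\<rfloor>"
proof -
  have "real m \<le> \<gamma> * real m" using mult_right_mono[OF assms, of "real m"] by simp
  then have "int m \<le> \<lfloor>\<gamma> * real m\<rfloor>" by (simp add: le_floor_iff)
  then show ?thesis by linarith
qed

lemma mult_le_nat_floor_mult: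
  fixes \<gamma> \<delta> :: real
  assumes "1 \<le> \<gamma>" "0 < \<delta>" "(1 + \<delta>) / \<delta> \<le> real m"
  shows "\<gamma> * real m \<le> (1 + \<delta>) * real (nat \<lfloor>\<gamma> * real m\<rfloor>)"
proof -
  have "1 + \<delta> \<le> \<delta> * real m" using assms(2,3) by (simp add: field_simps)
  also have "\<dots> \<le> \<delta> * (\<gamma> * real m)"
    using assms(2) mult_right_mono[OF assms(1), of "real m"] by (simp add: mult_left_mono)
  finally have "\<gamma> * real m \<le> (1 + \<delta>) * (\<gamma> * real m - 1)" by (simp add: algebra_simps)
  also have "\<dots> \<le> (1 + \<delta>) * real (nat \<lfloor>\<gamma> * real m\<rfloor>)"
    using assms(2) by (intro mult_left_mono) linarith+
  finally show ?thesis .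
qed

lemma mean_degree_le:
  fixes \<gamma> \<delta> d :: real
  assumes "0 < \<gamma>" "0 \<le> \<delta>" "0 \<le> d" "0 < n" "\<gamma> * real m \<le> (1 + \<delta>) * real n"
  shows "real m * (d / sqrt (real m * real n)) \<le> d * (1 + \<delta>) / sqrt \<gamma>"
proof (rule power2_le_imp_le)
  have "(real m * (d / sqrt (real m * real n)))^2 = d^2 * real m / real n"
    using assms(4) by (cases "m = 0") (simp_all add: power_divide power_mult_distrib power2_eq_square)
  also have "\<dots> \<le> d^2 * (1 + \<delta>) / \<gamma>"
  proof -
    have "real m / real n \<le> (1 + \<delta>) / \<gamma>"
      using assms(1,4,5) by (simp add: field_simps)
    then have "d^2 * (real m / real n) \<le> d^2 * ((1 + \<delta>) / \<gamma>)"
      by (rule mult_left_mono) simp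
    then show ?thesis by simp
  qed
  also have "\<dots> \<le> d^2 * (1 + \<delta>)^2 / \<gamma>"
    using assms(1,2) by (intro divide_right_mono mult_left_mono) (auto simp: power2_eq_square)
  also have "\<dots> = (d * (1 + \<delta>) / sqrt \<gamma>)^2"
    using assms(1) by (simp add: power_divide power_mult_distrib)
  finally show "(real m * (d / sqrt (real m * real n)))^2 \<le> (d * (1 + \<delta>) / sqrt \<gamma>)^2" .
qed (use assms in simp)

lemma prob_degree1_ge_le_powr:
  fixes b g \<epsilon> \<delta> \<nu> p N :: real
  assumes "finite V1" "finite V2" "x \<in> V1" "1 < g" "1 \<le> N" "0 \<le> p"
    and mean: "real (card V2) * p \<le> b * ln N * (1 + \<delta>) / g"
    and exponent: "b * ((1 + \<delta>) * (g - 1) - (1 - \<epsilon>) * g * ln g) \<le> - g * (1 + \<nu>)"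
  shows "measure_pmf.prob (random_bipartite V1 V2 p)
           {G. (1 - \<epsilon>) * (b * ln N) \<le> real (degree1 V2 G x)} \<le> N powr (- (1 + \<nu>))"
proof -
  have "ln g \<ge> 0" "ln N \<ge> 0" using assms(4,5) by simp_all
  have "measure_pmf.prob (random_bipartite V1 V2 p)
           {G. (1 - \<epsilon>) * (b * ln N) \<le> real (degree1 V2 G x)}
          \<le> exp (real (card V2) * p * (g - 1) - ln g * ((1 - \<epsilon>) * (b * ln N)))"
    using prob_degree1_ge[OF assms(1-3,6) \<open>ln g \<ge> 0\<close>] assms(4) by simp
  also have "\<dots> \<le> exp (b * ln N * (1 + \<delta>) / g * (g - 1) - ln g * ((1 - \<epsilon>) * (b * ln N)))"
    using mult_right_mono[OF mean, of "g - 1"] assms(4) by simp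
  also have "\<dots> = exp (ln N / g * (b * ((1 + \<delta>) * (g - 1) - (1 - \<epsilon>) * g * ln g)))"
    using assms(4) by (simp add: field_simps)
  also have "\<dots> \<le> exp (ln N / g * (- g * (1 + \<nu>)))"
    using mult_left_mono[OF exponent, of "ln N / g"] \<open>ln N \<ge> 0\<close> assms(4) by simp
  also have "\<dots> = N powr (- (1 + \<nu>))"
    using assms(4,5) by (simp add: powr_def algebra_simps)
  finally show ?thesis .
qed

lemma prob_inverse_norm_bound_ge_powr:
  fixes \<gamma> b \<epsilon> \<delta> \<nu> :: real and m :: nat
  assumes "1 < \<gamma>" "0 < b" "0 < \<epsilon>" "0 < \<delta>"
    and exponent: "b * ((1 + \<delta>) * (sqrt \<gamma> - 1) - (1 - \<epsilon>) * sqrt \<gamma> * ln (sqrt \<gamma>))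
                     \<le> - sqrt \<gamma> * (1 + \<nu>)"
    and m: "(1 + \<delta>) / \<delta> \<le> real m"
  shows "let n = nat \<lfloor>\<gamma> * real m\<rfloor>; N = n + m; d = b * ln (real N);
         p = d / sqrt (real m * real n); V1 = {1..n}; V2 = {n+1..n+m}
     in measure_pmf.prob (random_bipartite V1 V2 p)
          {G. \<exists>B. is_inverse_on V1 (\<lambda>x y. id_mat x y - degree_mat V2 G x y / d) B
                  \<and> op_norm_on V1 B \<le> 1 / \<epsilon>}
        \<ge> 1 - real N powr (- \<nu>)"
proof -
  define n where "n = nat \<lfloor>\<gamma> * real m\<rfloor>"
  define N where "N = n + m"
  have "1 < (1 + \<delta>) / \<delta>" using assms(4) by simp
  then have "m \<le> n" "1 \<le> m" using m nat_floor_mult_ge[of \<gamma> m] assms(1) by (simp_all add: n_def)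
  then have N: "1 < real N" "0 < ln (real N)" by (simp_all add: N_def)
  have "\<gamma> * real m \<le> (1 + \<delta>) * real n"
    using mult_le_nat_floor_mult[OF _ assms(4) m] assms(1) by (simp add: n_def)
  then have "real m * (b * ln (real N) / sqrt (real m * real n)) \<le> b * ln (real N) * (1 + \<delta>) / sqrt \<gamma>"
    using assms(1,2,4) N \<open>m \<le> n\<close> \<open>1 \<le> m\<close> by (intro mean_degree_le) simp_all
  then have "measure_pmf.prob (random_bipartite {1..n} {n+1..n+m} (b * ln (real N) / sqrt (real m * real n)))
          {G. \<exists>B. is_inverse_on {1..n} (\<lambda>x y. id_mat x y - degree_mat {n+1..n+m} G x y / (b * ln (real N))) B
                  \<and> op_norm_on {1..n} B \<le> 1 / \<epsilon>}
        \<ge> 1 - real (card {1..n}) * real N powr (- (1 + \<nu>))"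
    using assms(1-3) N \<open>m \<le> n\<close> \<open>1 \<le> m\<close>
    by (intro prob_inverse_norm_bound_ge prob_degree1_ge_le_powr[OF _ _ _ _ _ _ _ exponent]) simp_all
  moreover have "real (card {1..n}) * real N powr (- (1 + \<nu>)) \<le> real N powr (- \<nu>)"
  proof -
    have "real N powr (- (1 + \<nu>)) = real N powr (- \<nu>) / real N"
      unfolding minus_add_distrib using N by (subst powr_add) (simp add: powr_minus_divide)
    then have "real N * real N powr (- (1 + \<nu>)) = real N powr (- \<nu>)" using N by simp
    moreover have "real n * real N powr (- (1 + \<nu>)) \<le> real N * real N powr (- (1 + \<nu>))"
      by (intro mult_right_mono) (simp_all add: N_def)
    ultimately show ?thesis by simp
  qed
  ultimately show ?thesis
    by (simp add: Let_def n_def N_def)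
qed

theorem lemma6p7:
  fixes \<gamma> b :: real
  defines "\<kappa> \<equiv> \<gamma> powr (1/4)"
  assumes "\<gamma> \<ge> 1" and "b > 0"
    and "b * hfun (\<kappa>^2 - 1) > \<kappa>^2"
  shows "\<exists>\<epsilon>>0. \<exists>\<nu>>0. \<forall>\<^sub>F m in sequentially.
    (let n = nat \<lfloor>\<gamma> * real m\<rfloor>; N = n + m; d = b * ln (real N);
         p = d / sqrt (real m * real n); V1 = {1..n}; V2 = {n+1..n+m}
     in measure_pmf.prob (random_bipartite V1 V2 p)
          {G. \<exists>B. is_inverse_on V1 (\<lambda>x y. id_mat x y - degree_mat V2 G x y / d) B
                  \<and> op_norm_on V1 B \<le> 1 / \<epsilon>}
        \<ge> 1 - real N powr (- \<nu>))"
proof -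
  define g where "g = sqrt \<gamma>"
  have "\<kappa>^2 = g"
    using assms(2) by (simp add: \<kappa>_def g_def powr_power powr_half_sqrt[symmetric])
  define \<eta> where "\<eta> = b * (g * ln g - (g - 1)) - g"
  have "0 < \<eta>"
    using \<open>\<kappa>^2 = g\<close> assms(4) by (simp add: \<eta>_def hfun_def)
  then have "1 < g" using assms(2,3) by (cases "g = 1") (auto simp: \<eta>_def g_def)
  \<comment> \<open>\<open>\<epsilon>\<close> and \<open>\<delta>\<close> each use up a quarter of the margin \<open>\<eta>\<close>; the remaining half gives \<open>\<nu>\<close>.\<close>
  define \<epsilon> where "\<epsilon> = \<eta> / (4 * b * g * ln g)"
  define \<delta> where "\<delta> = \<eta> / (4 * b * (g - 1))"
  define \<nu> where "\<nu> = \<eta> / (2 * g)"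
  have pos: "0 < \<epsilon>" "0 < \<delta>" "0 < \<nu>"
    using \<open>0 < \<eta>\<close> \<open>1 < g\<close> assms(3) by (simp_all add: \<epsilon>_def \<delta>_def \<nu>_def)
  have "1 < \<gamma>" using \<open>1 < g\<close> by (simp add: g_def)
  have "b * ((1 + \<delta>) * (g - 1) - (1 - \<epsilon>) * g * ln g) = - g * (1 + \<nu>)"
    using \<open>1 < g\<close> assms(3) by (simp add: \<eta>_def \<epsilon>_def \<delta>_def \<nu>_def field_simps)
  then have exponent: "b * ((1 + \<delta>) * (sqrt \<gamma> - 1) - (1 - \<epsilon>) * sqrt \<gamma> * ln (sqrt \<gamma>))
                         \<le> - sqrt \<gamma> * (1 + \<nu>)"
    by (simp add: g_def)
  have large_m: "\<forall>\<^sub>F m in sequentially. (1 + \<delta>) / \<delta> \<le> real m"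
    using filterlim_real_sequentially by (simp add: filterlim_at_top)
  show ?thesis
    by (intro exI[of _ \<epsilon>] exI[of _ \<nu>] conjI pos(1,3) eventually_mono[OF large_m]
        prob_inverse_norm_bound_ge_powr[OF \<open>1 < \<gamma>\<close> assms(3) pos(1,2) exponent])
qed

end
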